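(* Let $G$ be a finite group, let $n\ge 1$ and let $m$ be odd. If $G$ is $R_{2^n m}$, then $G$ has at most $m(2^n-1)$ conjugacy classes containing involutions.
   Context: For a finite group $G$, $\overline{G}=G\cup\{\infty\}$, and $K_V$ denotes the complete graph on vertex set $V$. $G$ acts on $\overline{G}$ by right multiplication, with $\infty g=\infty$ for all $g\in G$; for a subgraph $F$ of $K_{\overline{G}}$ and $g\in G$, $Fg$ is the graph obtained by replacing every vertex $v$ by $vg$. A $k$-factor of $K_V$ is a spanning $k$-regular subgraph, and a $k$-factorization is a set of $k$-factors whose edge sets partition the edge set of $K_V$. A $k$-factorization $\mathcal{F}$ of $K_{\overline{G}}$ is $1$-rotational if $Fg\in\mathcal{F}$ for all $F\in\mathcal{F}$ and $g\in G$. A finite group $G$ is called $R_k$ if there exists a $1$-rotational $k$-factorization of $K_{\overline{G}}$. An involution is an element of order $2$. *)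

theory Defs
  imports "HOL-Algebra.Multiplicative_Group"
begin

text \<open>The extended set G-bar = G with infinity: vertices are of type 'a option,
  None plays the role of infinity, Some g the group element g.\<close>

definition Gbar :: "('a, 'b) monoid_scheme \<Rightarrow> 'a option set" where
  "Gbar G = Some ` carrier G \<union> {None}"

definition complete_edges :: "'v set \<Rightarrow> 'v set set" where
  "complete_edges V = {e. e \<subseteq> V \<and> card e = 2}"

definition degree :: "'v set set \<Rightarrow> 'v \<Rightarrow> nat" where
  "degree F v = card {e \<in> F. v \<in> e}"

definition is_k_factor :: "'v set \<Rightarrow> nat \<Rightarrow> 'v set set \<Rightarrow> bool" where
  "is_k_factor V k F \<longleftrightarrow> F \<subseteq> complete_edges V \<and> (\<forall>v\<in>V. degree F v = k)"

definition is_k_factorization :: "'v set \<Rightarrow> nat \<Rightarrow> 'v set set set \<Rightarrow> bool" where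
  "is_k_factorization V k \<F> \<longleftrightarrow>
     (\<forall>F\<in>\<F>. is_k_factor V k F) \<and>
     \<Union>\<F> = complete_edges V \<and>
     (\<forall>F1\<in>\<F>. \<forall>F2\<in>\<F>. F1 \<noteq> F2 \<longrightarrow> F1 \<inter> F2 = {})"

definition ract :: "('a, 'b) monoid_scheme \<Rightarrow> 'a \<Rightarrow> 'a option \<Rightarrow> 'a option" where
  "ract G g v = map_option (\<lambda>x. x \<otimes>\<^bsub>G\<^esub> g) v"

definition graph_act :: "('a, 'b) monoid_scheme \<Rightarrow> 'a option set set \<Rightarrow> 'a \<Rightarrow> 'a option set set" where
  "graph_act G F g = (\<lambda>e. ract G g ` e) ` F"

definition one_rotational :: "('a, 'b) monoid_scheme \<Rightarrow> 'a option set set set \<Rightarrow> bool" where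
  "one_rotational G \<F> \<longleftrightarrow> (\<forall>F\<in>\<F>. \<forall>g\<in>carrier G. graph_act G F g \<in> \<F>)"

definition is_R :: "nat \<Rightarrow> ('a, 'b) monoid_scheme \<Rightarrow> bool" where
  "is_R k G \<longleftrightarrow> (\<exists>\<F>. is_k_factorization (Gbar G) k \<F> \<and> one_rotational G \<F>)"

definition conj_class :: "('a, 'b) monoid_scheme \<Rightarrow> 'a \<Rightarrow> 'a set" where
  "conj_class G x = {inv\<^bsub>G\<^esub> g \<otimes>\<^bsub>G\<^esub> x \<otimes>\<^bsub>G\<^esub> g | g. g \<in> carrier G}"

definition involution_classes :: "('a, 'b) monoid_scheme \<Rightarrow> 'a set set" where
  "involution_classes G = {conj_class G x | x. x \<in> carrier G \<and> group.ord G x = 2}"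

end

theory Submission
  imports Defs "HOL-Algebra.Sylow"
begin

text \<open>Let \<open>F\<^sub>0\<close> be the factor containing the edge \<open>{\<infinity>, 1}\<close>. Since the factors through
  \<open>\<infinity>\<close> are exactly the translates of \<open>F\<^sub>0\<close>, the set \<open>S\<close> of neighbours of \<open>\<infinity>\<close> in \<open>F\<^sub>0\<close> is the
  stabiliser of \<open>F\<^sub>0\<close>, a subgroup of order \<open>k = 2\<^sup>n m\<close>. An involution \<open>t\<close> fixes the
  factor \<open>F\<^sub>0 y\<close> containing the edge \<open>{1, t}\<close>, so \<open>y t y\<inverse>\<close> lies in \<open>S\<close>. Inside \<open>S\<close> the
  involution \<open>y t y\<inverse>\<close> permutes the odd number \<open>m\<close> of cosets of a Sylow 2-subgroup \<open>P\<close>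
  and hence fixes one, so it is conjugate into \<open>P\<close>. Thus every class of involutions meets
  \<open>P - {1}\<close>, and there are at most \<open>2\<^sup>n - 1 \<le> m (2\<^sup>n - 1)\<close> of them.\<close>

lemma odd_card_involution_fixpoint:
  assumes "finite X" and "f ` X \<subseteq> X" and "\<And>x. x \<in> X \<Longrightarrow> f (f x) = x" and "odd (card X)"
  shows "\<exists>x\<in>X. f x = x"
  using assms
proof (induction "card X" arbitrary: X rule: less_induct)
  case less
  show ?case
  proof (rule ccontr)
    assume no_fix: "\<not> (\<exists>x\<in>X. f x = x)"
    obtain x where x: "x \<in> X"
      using less.prems(4) by (metis card.empty ex_in_conv odd_card_imp_not_empty)
    then have fx: "f x \<in> X" "f x \<noteq> x" using less.prems(2) no_fix by auto
    define Y where "Y = X - {x, f x}"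
    have pair: "{x, f x} \<subseteq> X" "card {x, f x} = 2" using x fx by auto
    then have "card {x, f x} \<le> card X" using less.prems(1) card_mono by metis
    then have card_Y: "card Y + 2 = card X"
      unfolding Y_def using less.prems(1) pair by (simp add: card_Diff_subset)
    have "\<exists>y\<in>Y. f y = y"
    proof (rule less.hyps)
      show "f ` Y \<subseteq> Y"
        unfolding Y_def using less.prems(2,3) x by (auto, metis+)
      show "odd (card Y)" using card_Y less.prems(4) by presburger
    qed (use card_Y less.prems in \<open>auto simp: Y_def\<close>)
    then show False using no_fix Y_def by auto
  qed
qed

context group
begin

lemma involution_conj_into_odd_index:
  assumes "finite (carrier G)" and P: "subgroup P G" and odd: "odd (card (rcosets P))"
    and u: "u \<in> carrier G" "u \<otimes> u = \<one>"
  shows "\<exists>y\<in>carrier G. y \<otimes> u \<otimes> inv y \<in> P"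
proof -
  have P_sub: "P \<subseteq> carrier G" using P subgroup.subset by blast
  have "finite (rcosets P)"
    using assms(1) rcosets_subset_PowG[OF P] by (meson finite_Pow_iff finite_subset)
  moreover have "(\<lambda>C. C #> u) ` (rcosets P) \<subseteq> rcosets P"
    using u P_sub by (auto simp: RCOSETS_def coset_mult_assoc)
  moreover have "(C #> u) #> u = C" if "C \<in> rcosets P" for C
  proof -
    have "C \<subseteq> carrier G" using that rcosets_part_G[OF P] by auto
    then show ?thesis using coset_mult_assoc u by simp
  qed
  ultimately obtain C where C: "C \<in> rcosets P" "C #> u = C"
    using odd_card_involution_fixpoint[of "rcosets P" "\<lambda>C. C #> u"] odd by blast
  then obtain y where y: "y \<in> carrier G" "C = P #> y" unfolding RCOSETS_def by auto
  have "y \<otimes> u \<in> P #> (y \<otimes> u)" using rcos_self P y u by simp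
  also have "P #> (y \<otimes> u) = P #> y" using C y coset_mult_assoc P_sub u by simp
  finally obtain p where p: "p \<in> P" "y \<otimes> u = p \<otimes> y" unfolding r_coset_def by auto
  then have "y \<otimes> u \<otimes> inv y = p" using y P_sub u by (metis inv_solve_right' m_closed subsetD)
  then show ?thesis using p(1) y(1) by blast
qed

lemma involution_conj_into_sylow:
  assumes "finite (carrier G)" and S: "subgroup S G" "card S = 2 ^ n * m" "odd m"
    and P: "subgroup P (G\<lparr>carrier := S\<rparr>)" "card P = 2 ^ n"
    and c: "c \<in> S" "c \<otimes> c = \<one>"
  shows "\<exists>z\<in>S. z \<otimes> c \<otimes> inv z \<in> P"
proof -
  interpret H: group "G\<lparr>carrier := S\<rparr>" using subgroup_imp_group[OF S(1)] .
  have "finite S" using assms(1) S(1) subgroup.subset finite_subset by blast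
  then have "card (rcosets\<^bsub>G\<lparr>carrier := S\<rparr>\<^esub> P) = m"
    using H.lagrange[OF P(1)] P(2) S(2) by (simp add: order_def)
  then obtain z where "z \<in> S" "z \<otimes> c \<otimes> inv\<^bsub>G\<lparr>carrier := S\<rparr>\<^esub> z \<in> P"
    using H.involution_conj_into_odd_index[OF _ P(1)] \<open>finite S\<close> S(3) c by auto
  then show ?thesis using S(1) by auto
qed

lemma conj_class_conj_subset:
  assumes g: "g \<in> carrier G" and x: "x \<in> carrier G"
  shows "conj_class G (g \<otimes> x \<otimes> inv g) \<subseteq> conj_class G x"
proof
  fix z assume "z \<in> conj_class G (g \<otimes> x \<otimes> inv g)"
  then obtain h where h: "h \<in> carrier G" "z = inv h \<otimes> (g \<otimes> x \<otimes> inv g) \<otimes> h"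
    unfolding conj_class_def by blast
  then have "z = inv (inv g \<otimes> h) \<otimes> x \<otimes> (inv g \<otimes> h)"
    using g x by (simp add: m_assoc inv_mult_group)
  then show "z \<in> conj_class G x" unfolding conj_class_def using h g by blast
qed

lemma conj_class_conj:
  assumes g: "g \<in> carrier G" and x: "x \<in> carrier G"
  shows "conj_class G (g \<otimes> x \<otimes> inv g) = conj_class G x"
proof
  have "x = inv g \<otimes> (g \<otimes> x \<otimes> inv g) \<otimes> inv (inv g)"
    using g x by (simp add: m_assoc flip: m_assoc[of "inv g" g])
  then show "conj_class G x \<subseteq> conj_class G (g \<otimes> x \<otimes> inv g)"
    using conj_class_conj_subset[of "inv g" "g \<otimes> x \<otimes> inv g"] g x by simp
qed (rule conj_class_conj_subset[OF g x])

lemma card_involution_classes_le: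
  assumes fin: "finite (carrier G)" and S: "subgroup S G" "card S = 2 ^ n * m" "odd m"
    and conj_into_S: "\<And>t. t \<in> carrier G \<Longrightarrow> t \<noteq> \<one> \<Longrightarrow> t \<otimes> t = \<one> \<Longrightarrow>
      \<exists>y\<in>carrier G. y \<otimes> t \<otimes> inv y \<in> S"
  shows "card (involution_classes G) \<le> 2 ^ n - 1"
proof -
  have "group (G\<lparr>carrier := S\<rparr>)" using subgroup_imp_group[OF S(1)] .
  moreover have "finite S" using fin S(1) subgroup.subset finite_subset by blast
  ultimately have "sylow (G\<lparr>carrier := S\<rparr>) 2 n m"
    using S(2) by (simp add: sylow_eq sylow_axioms_def order_def)
  then obtain P where P: "subgroup P (G\<lparr>carrier := S\<rparr>)" "card P = 2 ^ n"
    using sylow.sylow_thm by blast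
  have P_sub: "P \<subseteq> S" and one_P: "\<one> \<in> P"
    using subgroup.subset[OF P(1)] subgroup.one_closed[OF P(1)] by auto
  have "conj_class G t \<in> conj_class G ` (P - {\<one>})" if t: "t \<in> carrier G" "ord t = 2" for t
  proof -
    have t_inv: "t \<noteq> \<one>" "t \<otimes> t = \<one>"
      using t ord_eq_1[OF t(1)] pow_ord_eq_1[OF t(1)] by (simp_all add: numeral_2_eq_2)
    obtain y where y: "y \<in> carrier G" "y \<otimes> t \<otimes> inv y \<in> S" using conj_into_S t(1) t_inv by blast
    have "(y \<otimes> t \<otimes> inv y) \<otimes> (y \<otimes> t \<otimes> inv y) = y \<otimes> (t \<otimes> t) \<otimes> inv y"
      using y(1) t(1) by (simp add: m_assoc flip: m_assoc[of "inv y" y])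
    also have "\<dots> = \<one>" using y(1) t_inv(2) by simp
    finally obtain z where z: "z \<in> S" "z \<otimes> (y \<otimes> t \<otimes> inv y) \<otimes> inv z \<in> P"
      using involution_conj_into_sylow[OF fin S P] y(2) by blast
    define g where "g = z \<otimes> y"
    have g: "g \<in> carrier G" unfolding g_def using z(1) y(1) subgroup.mem_carrier[OF S(1)] by simp
    have "g \<otimes> t \<otimes> inv g = z \<otimes> (y \<otimes> t \<otimes> inv y) \<otimes> inv z"
      using z(1) y(1) t(1) S(1) by (simp add: g_def m_assoc inv_mult_group subgroup.mem_carrier)
    moreover have "g \<otimes> t \<otimes> inv g \<noteq> \<one>"
      using g t(1) t_inv(1) by (simp add: inv_solve_right')
    ultimately have "g \<otimes> t \<otimes> inv g \<in> P - {\<one>}" using z(2) by simp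
    then show ?thesis using conj_class_conj[OF g t(1)] by (metis image_eqI)
  qed
  then have "involution_classes G \<subseteq> conj_class G ` (P - {\<one>})"
    unfolding involution_classes_def by blast
  moreover have "finite P" using \<open>finite S\<close> P_sub finite_subset by blast
  ultimately have "card (involution_classes G) \<le> card (conj_class G ` (P - {\<one>}))"
    by (simp add: card_mono)
  also have "\<dots> \<le> card (P - {\<one>})" by (rule card_image_le) (use \<open>finite P\<close> in simp)
  also have "\<dots> = 2 ^ n - 1" using P(2) one_P \<open>finite P\<close> by simp
  finally show ?thesis .
qed

end

definition nbrs_infinity :: "('a, 'b) monoid_scheme \<Rightarrow> 'a option set set \<Rightarrow> 'a set" where
  "nbrs_infinity G F = {x \<in> carrier G. {None, Some x} \<in> F}"

lemma ract_image_mem_graph_act: "e \<in> F \<Longrightarrow> ract G g ` e \<in> graph_act G F g"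
  by (simp add: graph_act_def)

lemma edge_through_infinity:
  assumes "e \<in> complete_edges (Gbar G)" and "None \<in> e"
  shows "\<exists>x\<in>carrier G. e = {None, Some x}"
proof -
  obtain a b where "e = {a, b}" "a \<noteq> b"
    using assms(1) by (auto simp: complete_edges_def card_2_iff)
  then obtain w where w: "e = {None, w}" "w \<noteq> None"
    using assms(2) by (metis insert_commute insertE singletonD)
  then have "w \<in> Some ` carrier G" using assms(1) by (auto simp: complete_edges_def Gbar_def)
  then show ?thesis using w(1) by blast
qed

lemma card_nbrs_infinity:
  assumes "is_k_factor (Gbar G) k F"
  shows "card (nbrs_infinity G F) = k"
proof -
  have "{e \<in> F. None \<in> e} = (\<lambda>x. {None, Some x}) ` nbrs_infinity G F"
    using assms edge_through_infinity
    by (fastforce simp: is_k_factor_def nbrs_infinity_def)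
  moreover have "inj_on (\<lambda>x. {None, Some x}) (nbrs_infinity G F)"
    by (rule inj_onI) (simp add: doubleton_eq_iff)
  moreover have "degree F None = k" using assms by (simp add: is_k_factor_def Gbar_def)
  ultimately show ?thesis by (simp add: degree_def card_image)
qed

context group
begin

lemma graph_act_graph_act:
  assumes "F \<subseteq> Pow (Gbar G)" and "g \<in> carrier G" and "h \<in> carrier G"
  shows "graph_act G (graph_act G F g) h = graph_act G F (g \<otimes> h)"
proof -
  have "ract G h (ract G g v) = ract G (g \<otimes> h) v" if "v \<in> Gbar G" for v
    using that assms(2,3) by (auto simp: Gbar_def ract_def m_assoc)
  then have "ract G h ` ract G g ` e = ract G (g \<otimes> h) ` e" if "e \<in> F" for e
    using that assms(1) by (force simp: image_image intro: image_cong)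
  then show ?thesis unfolding graph_act_def image_image by (rule image_cong[OF refl])
qed

lemma graph_act_one:
  assumes "F \<subseteq> Pow (Gbar G)"
  shows "graph_act G F \<one> = F"
proof -
  have "ract G \<one> ` e = e" if "e \<in> F" for e
    using that assms by (force simp: Gbar_def ract_def)
  then show ?thesis unfolding graph_act_def by simp
qed

end

locale rotational_factorization = group G for G :: "('a, 'b) monoid_scheme" (structure) +
  fixes k :: nat and \<F> :: "'a option set set set"
  assumes factorization: "is_k_factorization (Gbar G) k \<F>"
    and rotational: "one_rotational G \<F>"
begin

lemma factor_is_k_factor: "F \<in> \<F> \<Longrightarrow> is_k_factor (Gbar G) k F"
  using factorization by (simp add: is_k_factorization_def)

lemma factor_subset_Pow: "F \<in> \<F> \<Longrightarrow> F \<subseteq> Pow (Gbar G)"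
  using factor_is_k_factor by (auto simp: is_k_factor_def complete_edges_def)

lemma factor_unique: "F1 \<in> \<F> \<Longrightarrow> F2 \<in> \<F> \<Longrightarrow> e \<in> F1 \<Longrightarrow> e \<in> F2 \<Longrightarrow> F1 = F2"
  using factorization unfolding is_k_factorization_def by blast

lemma edge_in_factor: "e \<in> complete_edges (Gbar G) \<Longrightarrow> \<exists>F\<in>\<F>. e \<in> F"
  using factorization by (auto simp: is_k_factorization_def)

lemma graph_act_factor: "F \<in> \<F> \<Longrightarrow> g \<in> carrier G \<Longrightarrow> graph_act G F g \<in> \<F>"
  using rotational by (simp add: one_rotational_def)

context
  fixes F\<^sub>0 assumes F\<^sub>0: "F\<^sub>0 \<in> \<F>" "{None, Some \<one>} \<in> F\<^sub>0"
begin

lemma factor_eq_graph_act: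
  assumes "F \<in> \<F>" and "y \<in> nbrs_infinity G F"
  shows "F = graph_act G F\<^sub>0 y"
proof (rule factor_unique[OF assms(1) graph_act_factor[OF F\<^sub>0(1)]])
  show "{None, Some y} \<in> F" and "y \<in> carrier G" using assms(2) by (auto simp: nbrs_infinity_def)
  then show "{None, Some y} \<in> graph_act G F\<^sub>0 y"
    using ract_image_mem_graph_act[OF F\<^sub>0(2), of G y] by (simp add: ract_def)
qed

lemma graph_act_eq_self_iff:
  assumes "x \<in> carrier G"
  shows "graph_act G F\<^sub>0 x = F\<^sub>0 \<longleftrightarrow> x \<in> nbrs_infinity G F\<^sub>0"
proof
  assume "graph_act G F\<^sub>0 x = F\<^sub>0"
  then show "x \<in> nbrs_infinity G F\<^sub>0"
    using ract_image_mem_graph_act[OF F\<^sub>0(2), of G x] assms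
    by (simp add: ract_def nbrs_infinity_def)
qed (use factor_eq_graph_act[OF F\<^sub>0(1)] in simp)

lemma subgroup_nbrs_infinity: "subgroup (nbrs_infinity G F\<^sub>0) G"
proof (rule subgroupI)
  have F\<^sub>0_Pow: "F\<^sub>0 \<subseteq> Pow (Gbar G)" using factor_subset_Pow[OF F\<^sub>0(1)] .
  show sub: "nbrs_infinity G F\<^sub>0 \<subseteq> carrier G" by (auto simp: nbrs_infinity_def)
  show "nbrs_infinity G F\<^sub>0 \<noteq> {}" using F\<^sub>0(2) by (auto simp: nbrs_infinity_def)
  fix a b assume a: "a \<in> nbrs_infinity G F\<^sub>0" and b: "b \<in> nbrs_infinity G F\<^sub>0"
  then have ab: "a \<in> carrier G" "b \<in> carrier G" using sub by auto
  have Fa: "graph_act G F\<^sub>0 a = F\<^sub>0" and Fb: "graph_act G F\<^sub>0 b = F\<^sub>0"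
    using graph_act_eq_self_iff ab a b by simp_all
  have "graph_act G F\<^sub>0 (inv a) = graph_act G (graph_act G F\<^sub>0 a) (inv a)" using Fa by simp
  also have "\<dots> = F\<^sub>0" using graph_act_graph_act F\<^sub>0_Pow ab graph_act_one by simp
  finally show "inv a \<in> nbrs_infinity G F\<^sub>0" using graph_act_eq_self_iff ab by simp
  have "graph_act G F\<^sub>0 (a \<otimes> b) = graph_act G (graph_act G F\<^sub>0 a) b"
    using graph_act_graph_act F\<^sub>0_Pow ab by simp
  also have "\<dots> = F\<^sub>0" using Fa Fb by simp
  finally show "a \<otimes> b \<in> nbrs_infinity G F\<^sub>0" using graph_act_eq_self_iff ab by simp
qed

text \<open>The factor \<open>F\<^sub>0 y\<close> through the edge \<open>{1, t}\<close> also contains \<open>{1, t} t = {t, 1}\<close>,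
  hence is fixed by \<open>t\<close>; so \<open>y t y\<inverse>\<close> fixes \<open>F\<^sub>0\<close>.\<close>

lemma involution_conj_into_nbrs_infinity:
  assumes "k \<ge> 1" and t: "t \<in> carrier G" "t \<noteq> \<one>" "t \<otimes> t = \<one>"
  shows "\<exists>y\<in>carrier G. y \<otimes> t \<otimes> inv y \<in> nbrs_infinity G F\<^sub>0"
proof -
  have "{Some \<one>, Some t} \<in> complete_edges (Gbar G)"
    using t by (auto simp: complete_edges_def Gbar_def)
  then obtain F where F: "F \<in> \<F>" "{Some \<one>, Some t} \<in> F" using edge_in_factor by blast
  have "ract G t ` {Some \<one>, Some t} = {Some \<one>, Some t}"
    using t by (auto simp: ract_def)
  then have Ft: "graph_act G F t = F"
    using factor_unique[OF graph_act_factor[OF F(1) t(1)] F(1)] ract_image_mem_graph_act[OF F(2)]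
      F(2) by metis
  obtain y where y: "y \<in> nbrs_infinity G F"
    using card_nbrs_infinity[OF factor_is_k_factor[OF F(1)]] assms(1) by fastforce
  then have y_carr: "y \<in> carrier G" by (simp add: nbrs_infinity_def)
  have F\<^sub>0_Pow: "F\<^sub>0 \<subseteq> Pow (Gbar G)" using factor_subset_Pow[OF F\<^sub>0(1)] .
  have "graph_act G F\<^sub>0 (y \<otimes> t \<otimes> inv y) = graph_act G (graph_act G (graph_act G F\<^sub>0 y) t) (inv y)"
    using graph_act_graph_act factor_subset_Pow graph_act_factor F\<^sub>0 y_carr t(1) by simp
  also have "\<dots> = graph_act G F\<^sub>0 (y \<otimes> inv y)"
    using factor_eq_graph_act[OF F(1) y] Ft graph_act_graph_act F\<^sub>0_Pow y_carr by simp
  also have "\<dots> = F\<^sub>0" using graph_act_one F\<^sub>0_Pow y_carr by simp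
  finally have "y \<otimes> t \<otimes> inv y \<in> nbrs_infinity G F\<^sub>0"
    using graph_act_eq_self_iff[of "y \<otimes> t \<otimes> inv y"] y_carr t(1) by simp
  then show ?thesis using y_carr by blast
qed

end

end

theorem theorem2p5:
  fixes G :: "('a, 'b) monoid_scheme" and n m :: nat
  assumes "group G" and "finite (carrier G)"
    and "n \<ge> 1" and "odd m"
    and "is_R (2 ^ n * m) G"
  shows "card (involution_classes G) \<le> m * (2 ^ n - 1)"
proof -
  obtain \<F> where "is_k_factorization (Gbar G) (2 ^ n * m) \<F>" "one_rotational G \<F>"
    using assms(5) unfolding is_R_def by blast
  then interpret rotational_factorization G "2 ^ n * m" \<F>
    using assms(1) by (simp add: rotational_factorization_def rotational_factorization_axioms_def)
  have "{None, Some \<one>\<^bsub>G\<^esub>} \<in> complete_edges (Gbar G)" by (auto simp: complete_edges_def Gbar_def)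
  then obtain F\<^sub>0 where F\<^sub>0: "F\<^sub>0 \<in> \<F>" "{None, Some \<one>\<^bsub>G\<^esub>} \<in> F\<^sub>0" using edge_in_factor by blast
  have k: "2 ^ n * m \<ge> 1" using odd_pos[OF assms(4)] by (simp add: Suc_le_eq)
  have "card (involution_classes G) \<le> 2 ^ n - 1"
  proof (rule card_involution_classes_le[OF assms(2) subgroup_nbrs_infinity[OF F\<^sub>0] _ assms(4)])
    show "card (nbrs_infinity G F\<^sub>0) = 2 ^ n * m"
      using card_nbrs_infinity factor_is_k_factor[OF F\<^sub>0(1)] by blast
  qed (use involution_conj_into_nbrs_infinity[OF F\<^sub>0 k] in blast)
  also have "\<dots> \<le> m * (2 ^ n - 1)" using assms(4) by (cases m) auto
  finally show ?thesis .
qed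

end
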